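(* In the setting of the context, let $L=\bigoplus_{i=0}^{r+1}\mathbb ZE_i$, let $L^*=\mathrm{Hom}_{\mathbb Z}(L,\mathbb Z)$ with dual basis $E_0^*,\dots,E_{r+1}^*$, for $i=1,\dots,r$ let $E_i^\vee\in L^*$ be the functional $C\mapsto E_i\cdot C$, and let $\mathbb E\le L^*$ be the subgroup generated by $E_1^\vee,\dots,E_r^\vee$. Then the homomorphism $\nu\colon L^*\to\mathbb Z^2$ defined by $E_i^*\mapsto\nu_i$ $(0\le i\le r+1)$ is surjective with kernel $\mathbb E$.
   Context: $R$ is a two-dimensional normal noetherian excellent Hensel local domain with residue field $\kappa$, having a rational minimal resolution $f\colon Y\to\operatorname{Spec}R$ whose exceptional locus is a chain $E_1,\dots,E_r$ of curves $E_i\simeq\mathbb P^1_\kappa$, with $E_i\cap E_{i+1}$ a single $\kappa$-rational point and no other intersections. $E_0,E_{r+1}\subset Y$ are irreducible non-exceptional curves with $E_0\cdot E_1=1$, $E_0\cdot E_j=0$ for $2\le j\le r$, $E_{r+1}\cdot E_r=1$, $E_{r+1}\cdot E_j=0$ for $1\le j\le r-1$. Put $m_i=-E_i^2$, $\nu_0=(0,1)$, $\nu_1=(1,0)$, $\nu_{i+1}=m_i\nu_i-\nu_{i-1}$ for $i=1,\dots,r$. *)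

theory Defs
  imports Main
begin

fun nu :: "(nat \<Rightarrow> int) \<Rightarrow> nat \<Rightarrow> int \<times> int" where
  "nu m 0 = (0, 1)"
| "nu m (Suc 0) = (1, 0)"
| "nu m (Suc (Suc i)) =
     (m (Suc i) * fst (nu m (Suc i)) - fst (nu m i),
      m (Suc i) * snd (nu m (Suc i)) - snd (nu m i))"

text \<open>L = free abelian group on E_0..E_(r+1); L* = Hom(L,Z) is represented by
  the coordinate function k \<mapsto> phi(E_k), i.e. phi = sum_k phi(E_k) E_k^*,
  with phi k = 0 for k > r+1.\<close>
definition Ldual :: "nat \<Rightarrow> (nat \<Rightarrow> int) set" where
  "Ldual r = {phi. \<forall>k>r+1. phi k = 0}"

text \<open>E_i^vee : C \<mapsto> E_i . C, with intersection numbers IP i k = E_i . E_k.\<close>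
definition Evee :: "(nat \<Rightarrow> nat \<Rightarrow> int) \<Rightarrow> nat \<Rightarrow> nat \<Rightarrow> nat \<Rightarrow> int" where
  "Evee IP r i = (\<lambda>k. if k \<le> r + 1 then IP i k else 0)"

definition Egrp :: "(nat \<Rightarrow> nat \<Rightarrow> int) \<Rightarrow> nat \<Rightarrow> (nat \<Rightarrow> int) set" where
  "Egrp IP r = {phi. \<exists>c :: nat \<Rightarrow> int. phi = (\<lambda>k. \<Sum>i=1..r. c i * Evee IP r i k)}"

definition numap :: "(nat \<Rightarrow> int) \<Rightarrow> nat \<Rightarrow> (nat \<Rightarrow> int) \<Rightarrow> int \<times> int" where
  "numap m r phi = ((\<Sum>k=0..r+1. phi k * fst (nu m k)), (\<Sum>k=0..r+1. phi k * snd (nu m k)))"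

end

theory Submission
  imports Defs "HOL-Library.Product_Plus"
begin

text \<open>On a chain, \<open>E\<^sub>i\<^sup>\<or> = E\<^sub>i\<^sub>-\<^sub>1\<^sup>* - m\<^sub>i E\<^sub>i\<^sup>* + E\<^sub>i\<^sub>+\<^sub>1\<^sup>*\<close>, which \<open>\<nu>\<close> kills
  by the very recursion defining \<open>\<nu>\<^sub>i\<^sub>+\<^sub>1\<close>. Since the coefficient of \<open>E\<^sub>i\<^sub>+\<^sub>1\<^sup>*\<close> in
  \<open>E\<^sub>i\<^sup>\<or>\<close> is 1, subtracting multiples of \<open>E\<^sub>r\<^sup>\<or>, \<dots>, E\<^sub>1\<^sup>\<or>\<close> reduces every functional
  modulo \<open>\<bbbE>\<close> to one supported on \<open>E\<^sub>0\<^sup>*, E\<^sub>1\<^sup>*\<close>, and on those \<open>\<nu>\<close> is the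
  bijection \<open>a E\<^sub>1\<^sup>* + b E\<^sub>0\<^sup>* \<mapsto> (a, b)\<close>.\<close>

definition chain_vee :: "(nat \<Rightarrow> int) \<Rightarrow> nat \<Rightarrow> nat \<Rightarrow> int" where
  "chain_vee m i = (\<lambda>k. if k + 1 = i \<or> k = i + 1 then 1 else if k = i then - m i else 0)"

definition chain_span :: "(nat \<Rightarrow> int) \<Rightarrow> nat \<Rightarrow> (nat \<Rightarrow> int) set" where
  "chain_span m r = {(\<lambda>k. \<Sum>i=1..r. c i * chain_vee m i k) | c. True}"

lemma chain_vee_eq_0_above:
  assumes "i \<le> r" "r + 1 < k"
  shows "chain_vee m i k = 0"
  using assms by (simp add: chain_vee_def)

lemma chain_span_subset_Ldual: "chain_span m r \<subseteq> Ldual r"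
  unfolding chain_span_def Ldual_def by (auto intro!: sum.neutral simp: chain_vee_eq_0_above)

lemma zero_in_chain_span: "(\<lambda>k. 0) \<in> chain_span m r"
  unfolding chain_span_def by (intro CollectI exI[of _ "\<lambda>_. 0"]) simp

lemma chain_span_add_chain_vee:
  assumes "psi \<in> chain_span m r" "1 \<le> i" "i \<le> r"
  shows "(\<lambda>k. psi k + a * chain_vee m i k) \<in> chain_span m r"
proof -
  obtain c where c: "psi = (\<lambda>k. \<Sum>j=1..r. c j * chain_vee m j k)"
    using assms(1) by (auto simp: chain_span_def)
  define c' where "c' = c(i := c i + a)"
  have "(\<Sum>j=1..r. c' j * chain_vee m j k) = psi k + a * chain_vee m i k" for k
  proof -
    have "(\<Sum>j=1..r. c' j * chain_vee m j k)
        = (\<Sum>j=1..r. c j * chain_vee m j k + (if j = i then a * chain_vee m j k else 0))"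
      by (intro sum.cong) (auto simp: c'_def distrib_right)
    also have "\<dots> = psi k + a * chain_vee m i k"
      using assms(2,3) by (simp add: sum.distrib c)
    finally show ?thesis .
  qed
  then show ?thesis
    unfolding chain_span_def by (intro CollectI exI[of _ c']) auto
qed

lemma chain_span_eq_off_01:
  assumes "n \<le> r" "\<And>k. n + 1 < k \<Longrightarrow> phi k = 0"
  shows "\<exists>psi \<in> chain_span m r. \<forall>k\<ge>2. phi k = psi k"
  using assms
proof (induction n arbitrary: phi)
  case 0
  show ?case
    by (rule bexI[OF _ zero_in_chain_span]) (use 0 in simp)
next
  case (Suc n)
  define a where "a = phi (n + 2)"
  define phi' where "phi' = (\<lambda>k. phi k - a * chain_vee m (n + 1) k)"
  have "phi' k = 0" if "n + 1 < k" for k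
    using Suc.prems(2)[of k] that by (cases "k = n + 2") (auto simp: phi'_def a_def chain_vee_def)
  with Suc.prems(1) have "\<exists>psi' \<in> chain_span m r. \<forall>k\<ge>2. phi' k = psi' k"
    by (intro Suc.IH) auto
  then obtain psi' where psi': "psi' \<in> chain_span m r" "\<forall>k\<ge>2. phi' k = psi' k"
    by blast
  define psi where "psi = (\<lambda>k. psi' k + a * chain_vee m (n + 1) k)"
  have "psi \<in> chain_span m r"
    using chain_span_add_chain_vee[OF psi'(1)] Suc.prems(1) by (simp add: psi_def)
  moreover have "\<forall>k\<ge>2. phi k = psi k"
    using psi'(2) by (simp add: psi_def phi'_def algebra_simps)
  ultimately show ?case
    by blast
qed

lemma nu_step:
  assumes "1 \<le> i"
  shows "nu m (i + 1) = (m i * fst (nu m i) - fst (nu m (i - 1)), m i * snd (nu m i) - snd (nu m (i - 1)))"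
  using assms by (cases i) auto

lemma sum_chain_vee:
  assumes "1 \<le> i" "i \<le> r"
  shows "(\<Sum>k=0..r+1. chain_vee m i k * g k) = g (i - 1) + g (i + 1) - m i * g i"
proof -
  have "(\<Sum>k=0..r+1. chain_vee m i k * g k)
      = (\<Sum>k=0..r+1. (if k = i - 1 then g k else 0) + (if k = i + 1 then g k else 0)
                     - (if k = i then m i * g k else 0))"
    using assms by (intro sum.cong) (auto simp: chain_vee_def)
  also have "\<dots> = g (i - 1) + g (i + 1) - m i * g i"
    using assms by (simp add: sum.distrib sum_subtractf del: sum.cl_ivl_Suc; arith)
  finally show ?thesis .
qed

lemma numap_chain_vee:
  assumes "1 \<le> i" "i \<le> r"
  shows "numap m r (chain_vee m i) = 0"
  using sum_chain_vee[OF assms, of m "\<lambda>k. fst (nu m k)"] sum_chain_vee[OF assms, of m "\<lambda>k. snd (nu m k)"]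
    nu_step[OF assms(1)]
  by (simp add: numap_def zero_prod_def)

lemma numap_chain_span:
  assumes "phi \<in> chain_span m r"
  shows "numap m r phi = 0"
proof -
  obtain c where c: "phi = (\<lambda>k. \<Sum>i=1..r. c i * chain_vee m i k)"
    using assms by (auto simp: chain_span_def)
  have "(\<Sum>k=0..r+1. phi k * g k) = (\<Sum>i=1..r. c i * (\<Sum>k=0..r+1. chain_vee m i k * g k))" for g
    by (simp only: c sum_distrib_left sum_distrib_right mult.assoc sum.swap[of _ "{1..r}"])
  moreover have "numap m r (chain_vee m i) = 0" if "i \<in> {1..r}" for i
    using numap_chain_vee that by simp
  ultimately show ?thesis
    by (simp add: numap_def zero_prod_def del: sum.cl_ivl_Suc)
qed

lemma numap_diff: "numap m r (phi - psi) = numap m r phi - numap m r psi"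
  by (simp add: numap_def sum_subtractf left_diff_distrib)

lemma numap_supported_01:
  assumes "\<And>k. 2 \<le> k \<Longrightarrow> psi k = 0"
  shows "numap m r psi = (psi 1, psi 0)"
proof -
  have sum_eq: "(\<Sum>k=0..r+1. psi k * g k) = (\<Sum>k\<in>{0,1}. psi k * g k)" for g :: "nat \<Rightarrow> int"
    by (rule sum.mono_neutral_right) (use assms in auto)
  show ?thesis
    using sum_eq[of "\<lambda>k. fst (nu m k)"] sum_eq[of "\<lambda>k. snd (nu m k)"] by (simp add: numap_def)
qed

lemma numap_Ldual_surj: "numap m r ` Ldual r = UNIV"
proof -
  have "x \<in> numap m r ` Ldual r" for x
  proof -
    define phi where "phi = (\<lambda>k::nat. if k = 0 then snd x else if k = 1 then fst x else 0)"
    have "phi \<in> Ldual r"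
      by (simp add: phi_def Ldual_def)
    moreover have "numap m r phi = x"
      by (subst numap_supported_01) (auto simp: phi_def)
    ultimately show ?thesis
      by blast
  qed
  then show ?thesis
    by blast
qed

lemma numap_kernel_eq_chain_span:
  "{phi \<in> Ldual r. numap m r phi = (0, 0)} = chain_span m r"
proof (rule equalityI)
  show "chain_span m r \<subseteq> {phi \<in> Ldual r. numap m r phi = (0, 0)}"
    using chain_span_subset_Ldual numap_chain_span by (fastforce simp: zero_prod_def)
next
  show "{phi \<in> Ldual r. numap m r phi = (0, 0)} \<subseteq> chain_span m r"
  proof (rule subsetI)
    fix phi
    assume "phi \<in> {phi \<in> Ldual r. numap m r phi = (0, 0)}"
    then have phi: "phi \<in> Ldual r" "numap m r phi = (0, 0)"
      by simp_all
    have "\<exists>psi \<in> chain_span m r. \<forall>k\<ge>2. phi k = psi k"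
      by (rule chain_span_eq_off_01[of r]) (use phi(1) in \<open>auto simp: Ldual_def\<close>)
    then obtain psi where psi: "psi \<in> chain_span m r" "\<forall>k\<ge>2. phi k = psi k"
      by blast
    have "numap m r (phi - psi) = 0"
      using phi(2) numap_chain_span[OF psi(1)] by (simp add: numap_diff zero_prod_def)
    moreover have "numap m r (phi - psi) = (phi 1 - psi 1, phi 0 - psi 0)"
      using psi(2) by (subst numap_supported_01) auto
    ultimately have "phi 0 = psi 0" "phi 1 = psi 1"
      by (simp_all add: zero_prod_def)
    have "phi k = psi k" for k
    proof -
      consider "k = 0" | "k = 1" | "2 \<le> k"
        by linarith
      then show ?thesis
        by cases (use \<open>phi 0 = psi 0\<close> \<open>phi 1 = psi 1\<close> psi(2) in simp_all)
    qed
    then have "phi = psi"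
      by (rule ext)
    with psi(1) show "phi \<in> chain_span m r"
      by simp
  qed
qed

lemma Evee_eq_chain_vee:
  fixes IP :: "nat \<Rightarrow> nat \<Rightarrow> int"
  assumes sym: "\<And>i j. i \<le> r + 1 \<Longrightarrow> j \<le> r + 1 \<Longrightarrow> IP i j = IP j i"
    and self: "\<And>i. 1 \<le> i \<Longrightarrow> i \<le> r \<Longrightarrow> IP i i = - m i"
    and adj: "\<And>i. 1 \<le> i \<Longrightarrow> i < r \<Longrightarrow> IP i (i + 1) = 1"
    and far: "\<And>i j. 1 \<le> i \<Longrightarrow> i \<le> r \<Longrightarrow> 1 \<le> j \<Longrightarrow> j \<le> r \<Longrightarrow> i + 1 < j \<Longrightarrow> IP i j = 0"
    and E0a: "IP 0 1 = 1"
    and E0b: "\<And>j. 2 \<le> j \<Longrightarrow> j \<le> r \<Longrightarrow> IP 0 j = 0"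
    and Era: "IP (r + 1) r = 1"
    and Erb: "\<And>j. 1 \<le> j \<Longrightarrow> j \<le> r - 1 \<Longrightarrow> IP (r + 1) j = 0"
    and i: "1 \<le> i" "i \<le> r"
  shows "Evee IP r i = chain_vee m i"
proof
  fix k
  have "IP i k = chain_vee m i k" if k: "k \<le> r + 1"
  proof -
    consider "k < i" | "k = i" | "k = i + 1" | "i + 1 < k"
      by linarith
    then show ?thesis
    proof cases
      case 1
      then have "IP k i = chain_vee m i k"
        using E0a E0b[of i] adj[of k] far[of k i] i
        by (cases "k = 0"; cases "k + 1 = i") (auto simp: chain_vee_def)
      with sym[of i k] i k show ?thesis
        by simp
    next
      case 2
      with self i show ?thesis
        by (simp add: chain_vee_def)
    next
      case 3
      then show ?thesis
        using adj[of i] sym[of r "r + 1"] Era i by (cases "i = r") (auto simp: chain_vee_def)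
    next
      case 4
      then show ?thesis
        using far[of i k] sym[of i "r + 1"] Erb[of i] i k
        by (cases "k = r + 1") (auto simp: chain_vee_def)
    qed
  qed
  then show "Evee IP r i k = chain_vee m i k"
    using chain_vee_eq_0_above[OF i(2)] by (simp add: Evee_def)
qed

lemma Egrp_eq_chain_span:
  assumes "\<And>i. 1 \<le> i \<Longrightarrow> i \<le> r \<Longrightarrow> Evee IP r i = chain_vee m i"
  shows "Egrp IP r = chain_span m r"
proof -
  have "(\<lambda>k. \<Sum>i=1..r. c i * Evee IP r i k) = (\<lambda>k. \<Sum>i=1..r. c i * chain_vee m i k)" for c
    using assms by (intro ext sum.cong) auto
  then show ?thesis
    unfolding Egrp_def chain_span_def by simp
qed

theorem proposition4p4:
  fixes r :: nat and IP :: "nat \<Rightarrow> nat \<Rightarrow> int" and m :: "nat \<Rightarrow> int"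
  assumes r: "r \<ge> 1"
    and sym: "\<And>i j. i \<le> r + 1 \<Longrightarrow> j \<le> r + 1 \<Longrightarrow> IP i j = IP j i"
    and self: "\<And>i. 1 \<le> i \<Longrightarrow> i \<le> r \<Longrightarrow> IP i i = - m i"
    and adj: "\<And>i. 1 \<le> i \<Longrightarrow> i < r \<Longrightarrow> IP i (i + 1) = 1"
    and far: "\<And>i j. 1 \<le> i \<Longrightarrow> i \<le> r \<Longrightarrow> 1 \<le> j \<Longrightarrow> j \<le> r \<Longrightarrow> i + 1 < j \<Longrightarrow> IP i j = 0"
    and E0a: "IP 0 1 = 1"
    and E0b: "\<And>j. 2 \<le> j \<Longrightarrow> j \<le> r \<Longrightarrow> IP 0 j = 0"
    and Era: "IP (r + 1) r = 1"
    and Erb: "\<And>j. 1 \<le> j \<Longrightarrow> j \<le> r - 1 \<Longrightarrow> IP (r + 1) j = 0"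
  shows "numap m r ` Ldual r = UNIV \<and> {phi \<in> Ldual r. numap m r phi = (0, 0)} = Egrp IP r"
proof -
  have "Egrp IP r = chain_span m r"
    by (rule Egrp_eq_chain_span, rule Evee_eq_chain_vee[OF sym self adj far E0a E0b Era Erb])
  then show ?thesis
    using numap_Ldual_surj numap_kernel_eq_chain_span by simp
qed

end
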